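(* Define the relation $\succeq^6$ on $\mathcal{A}$ by $\mathbf{A}\succeq^6\mathbf{B}\iff\mu(\mathbf{A})^n\le\mu(\mathbf{B})^m$, where $n$ is the size of $\mathbf{A}$, $m$ is the size of $\mathbf{B}$, and for $\mathbf{A}=[a_{ij}]$ of size $n$, $\mu(\mathbf{A})=\max_{1\le i<j<k\le n}\max\{a_{ij}a_{jk}/a_{ik},\ a_{ik}/(a_{ij}a_{jk})\}$. Then $\succeq^6$ is an inconsistency ranking that satisfies PR, IIP, HTE, SI and MON, but does not satisfy RED.
   Context: A pairwise comparison matrix of size $n$ is a matrix $\mathbf{A}=[a_{ij}]\in\mathbb{R}^{n\times n}$ with all entries positive and $a_{ji}=1/a_{ij}$ for all $i,j$. Let $\mathcal{A}$ denote the set of all pairwise comparison matrices of all sizes $n\ge 3$. For $\mathbf{A}\in\mathcal{A}$ of size $n$ and $3\le m\le n$, a submatrix of $\mathbf{A}$ is a matrix $\mathbf{B}=[b_{ij}]$ of size $m$ with $b_{ij}=a_{\sigma(i)\sigma(j)}$ for some strictly increasing map $\sigma:\{1,\dots,m\}\to\{1,\dots,n\}$. A triad is a pairwise comparison matrix of size $3$; a triad of $\mathbf{A}$ is a submatrix of $\mathbf{A}$ of size $3$ (when $n=3$, $\mathbf{A}$ is its own unique triad). A triad $\mathbf{T}$ is written $\mathbf{T}=(t_1;t_2;t_3)$, meaning $t_{12}=t_1$, $t_{13}=t_2$, $t_{23}=t_3$ (the remaining entries are determined by reciprocity); $\mathbf{T}^\top$ denotes its transpose, i.e. the triad $(1/t_1;1/t_2;1/t_3)$.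 An inconsistency ranking is a complete and transitive binary relation $\succeq$ on $\mathcal{A}$; $\mathbf{A}\sim\mathbf{B}$ means $\mathbf{A}\succeq\mathbf{B}$ and $\mathbf{B}\succeq\mathbf{A}$; $\mathbf{A}\preceq\mathbf{B}$ means $\mathbf{B}\succeq\mathbf{A}$. Properties of an inconsistency ranking $\succeq$: (PR) for all $s_2,t_2\ge 1$: $(1;s_2;1)\succeq(1;t_2;1)\iff s_2\le t_2$. (IIP) $\mathbf{T}\sim\mathbf{T}^\top$ for every triad $\mathbf{T}$. (HTE) $(1;t_2;t_3)\sim(1;t_2/t_3;1)$ for all $t_2,t_3>0$. (SI) $(t_1;t_2;t_3)\sim(kt_1;k^2t_2;kt_3)$ for all $t_1,t_2,t_3>0$ and all $k>0$. (MON) $\mathbf{A}\preceq\mathbf{T}$ for every $\mathbf{A}\in\mathcal{A}$ and every triad $\mathbf{T}$ of $\mathbf{A}$. (RED) every $\mathbf{A}\in\mathcal{A}$ has a triad $\mathbf{T}$ with $\mathbf{A}\sim\mathbf{T}$. *)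

theory Defs
  imports Complex_Main
begin

text \<open>A matrix of size n is represented as a pair (n, a) with a :: nat => nat => real;
  indices range over 0..n-1 and entries outside this range are normalised to 1,
  so that every pairwise comparison matrix has a unique representative.\<close>

type_synonym mat = "nat \<times> (nat \<Rightarrow> nat \<Rightarrow> real)"

definition msize :: "mat \<Rightarrow> nat" where "msize A = fst A"
definition ent :: "mat \<Rightarrow> nat \<Rightarrow> nat \<Rightarrow> real" where "ent A = snd A"

definition is_pcm :: "mat \<Rightarrow> bool" where
  "is_pcm A \<longleftrightarrow>
     (\<forall>i<msize A. \<forall>j<msize A. ent A i j > 0 \<and> ent A j i = 1 / ent A i j) \<and>
     (\<forall>i j. (msize A \<le> i \<or> msize A \<le> j) \<longrightarrow> ent A i j = 1)"

definition PCMs :: "mat set" where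
  "PCMs = {A. 3 \<le> msize A \<and> is_pcm A}"

definition submatrix :: "mat \<Rightarrow> mat \<Rightarrow> bool" where
  "submatrix B A \<longleftrightarrow> A \<in> PCMs \<and> B \<in> PCMs \<and> msize B \<le> msize A \<and>
     (\<exists>\<sigma>. strict_mono_on {0..<msize B} \<sigma> \<and> (\<forall>i<msize B. \<sigma> i < msize A) \<and>
          (\<forall>i<msize B. \<forall>j<msize B. ent B i j = ent A (\<sigma> i) (\<sigma> j)))"

definition triad_of :: "mat \<Rightarrow> mat \<Rightarrow> bool" where
  "triad_of T A \<longleftrightarrow> submatrix T A \<and> msize T = 3"

text \<open>The triad (t1;t2;t3): t12 = t1, t13 = t2, t23 = t3 (0-based indices).\<close>
definition triad :: "real \<Rightarrow> real \<Rightarrow> real \<Rightarrow> mat" where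
  "triad t1 t2 t3 = (3, \<lambda>i j.
     if i = 0 \<and> j = 1 then t1 else if i = 1 \<and> j = 0 then 1 / t1
     else if i = 0 \<and> j = 2 then t2 else if i = 2 \<and> j = 0 then 1 / t2
     else if i = 1 \<and> j = 2 then t3 else if i = 2 \<and> j = 1 then 1 / t3
     else 1)"

definition mtranspose :: "mat \<Rightarrow> mat" where
  "mtranspose A = (msize A, \<lambda>i j. ent A j i)"

definition mu :: "mat \<Rightarrow> real" where
  "mu A = Max {max (ent A i j * ent A j k / ent A i k) (ent A i k / (ent A i j * ent A j k)) |
                 i j k. i < j \<and> j < k \<and> k < msize A}"

definition rel6 :: "mat \<Rightarrow> mat \<Rightarrow> bool" where
  "rel6 A B \<longleftrightarrow> mu A ^ msize A \<le> mu B ^ msize B"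

definition indiff :: "(mat \<Rightarrow> mat \<Rightarrow> bool) \<Rightarrow> mat \<Rightarrow> mat \<Rightarrow> bool" where
  "indiff R A B \<longleftrightarrow> R A B \<and> R B A"

definition inconsistency_ranking :: "(mat \<Rightarrow> mat \<Rightarrow> bool) \<Rightarrow> bool" where
  "inconsistency_ranking R \<longleftrightarrow>
     (\<forall>A\<in>PCMs. \<forall>B\<in>PCMs. R A B \<or> R B A) \<and>
     (\<forall>A\<in>PCMs. \<forall>B\<in>PCMs. \<forall>C\<in>PCMs. R A B \<longrightarrow> R B C \<longrightarrow> R A C)"

definition PR :: "(mat \<Rightarrow> mat \<Rightarrow> bool) \<Rightarrow> bool" where
  "PR R \<longleftrightarrow> (\<forall>s2 t2::real. s2 \<ge> 1 \<longrightarrow> t2 \<ge> 1 \<longrightarrow>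
     (R (triad 1 s2 1) (triad 1 t2 1) \<longleftrightarrow> s2 \<le> t2))"

definition IIP :: "(mat \<Rightarrow> mat \<Rightarrow> bool) \<Rightarrow> bool" where
  "IIP R \<longleftrightarrow> (\<forall>T\<in>PCMs. msize T = 3 \<longrightarrow> indiff R T (mtranspose T))"

definition HTE :: "(mat \<Rightarrow> mat \<Rightarrow> bool) \<Rightarrow> bool" where
  "HTE R \<longleftrightarrow> (\<forall>t2 t3::real. t2 > 0 \<longrightarrow> t3 > 0 \<longrightarrow>
     indiff R (triad 1 t2 t3) (triad 1 (t2 / t3) 1))"

definition SI :: "(mat \<Rightarrow> mat \<Rightarrow> bool) \<Rightarrow> bool" where
  "SI R \<longleftrightarrow> (\<forall>t1 t2 t3 k::real. t1 > 0 \<longrightarrow> t2 > 0 \<longrightarrow> t3 > 0 \<longrightarrow> k > 0 \<longrightarrow>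
     indiff R (triad t1 t2 t3) (triad (k * t1) (k^2 * t2) (k * t3)))"

definition MON :: "(mat \<Rightarrow> mat \<Rightarrow> bool) \<Rightarrow> bool" where
  "MON R \<longleftrightarrow> (\<forall>A\<in>PCMs. \<forall>T. triad_of T A \<longrightarrow> R T A)"

definition RED :: "(mat \<Rightarrow> mat \<Rightarrow> bool) \<Rightarrow> bool" where
  "RED R \<longleftrightarrow> (\<forall>A\<in>PCMs. \<exists>T. triad_of T A \<and> indiff R A T)"

end

theory Submission
  imports Defs
begin

text \<open>Everything reduces to facts about \<open>\<mu>\<close>: it is the maximum of
  \<open>max x (1/x)\<close> over the triads of a matrix, so it is at least 1, invariant under transposition,
  a function of \<open>t\<^sub>1 t\<^sub>3 / t\<^sub>2\<close> on a triad, and it can only grow when passing from a submatrix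
  to the whole matrix. On triads \<open>\<succeq>\<^sup>6\<close> compares \<open>\<mu>\<^sup>3\<close>, which gives PR, IIP, HTE and SI;
  MON follows from \<open>\<mu>(T)\<^sup>3 \<le> \<mu>(A)\<^sup>3 \<le> \<mu>(A)\<^sup>n\<close>. RED fails because the exponent \<open>n\<close> penalises
  large matrices: for \<open>n > 3\<close> and \<open>\<mu>(A) > 1\<close> every triad \<open>T\<close> of \<open>A\<close> has
  \<open>\<mu>(T)\<^sup>3 \<le> \<mu>(A)\<^sup>3 < \<mu>(A)\<^sup>n\<close>.\<close>

definition triple_incons :: "(nat \<Rightarrow> nat \<Rightarrow> real) \<Rightarrow> nat \<Rightarrow> nat \<Rightarrow> nat \<Rightarrow> real" where
  "triple_incons a i j k = max (a i j * a j k / a i k) (a i k / (a i j * a j k))"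

lemma mu_eq_Max:
  "mu A = Max {triple_incons (ent A) i j k | i j k. i < j \<and> j < k \<and> k < msize A}"
  unfolding mu_def triple_incons_def by simp

lemma finite_triple_incons_values:
  "finite {triple_incons a i j k | i j k. i < j \<and> j < k \<and> k < (n::nat)}"
proof (rule finite_subset)
  show "{triple_incons a i j k | i j k. i < j \<and> j < k \<and> k < n} \<subseteq>
        (\<lambda>(i, j, k). triple_incons a i j k) ` ({..<n} \<times> {..<n} \<times> {..<n})"
    by (force intro: image_eqI[where x = "(_, _, _)"])
qed simp

lemma triple_incons_le_mu:
  "i < j \<Longrightarrow> j < k \<Longrightarrow> k < msize A \<Longrightarrow> triple_incons (ent A) i j k \<le> mu A"
  unfolding mu_eq_Max by (rule Max_ge[OF finite_triple_incons_values]) blast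

lemma mu_attained:
  assumes "3 \<le> msize A"
  obtains i j k where "i < j" "j < k" "k < msize A" "mu A = triple_incons (ent A) i j k"
proof -
  have "triple_incons (ent A) 0 1 2 \<in>
        {triple_incons (ent A) i j k | i j k. i < j \<and> j < k \<and> k < msize A}"
    using assms by force
  from Max_in[OF finite_triple_incons_values] this that show thesis
    unfolding mu_eq_Max by blast
qed

lemma mu_size_3: assumes "msize A = 3" shows "mu A = triple_incons (ent A) 0 1 2"
proof -
  have "3 \<le> msize A" using assms by simp
  then obtain i j k where "i < j" "j < k" "k < msize A" "mu A = triple_incons (ent A) i j k"
    by (rule mu_attained)
  moreover from this have "i = 0" "j = 1" "k = 2" using assms by linarith+
  ultimately show ?thesis by simp
qed

lemma max_inverse_ge_one: "0 < (x::real) \<Longrightarrow> 1 \<le> max x (1 / x)"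
  by (cases "1 \<le> x") (auto simp: le_max_iff_disj field_simps)

lemma pcm_pos: "A \<in> PCMs \<Longrightarrow> i < msize A \<Longrightarrow> j < msize A \<Longrightarrow> 0 < ent A i j"
  unfolding PCMs_def is_pcm_def by blast

lemma pcm_reciprocal:
  "A \<in> PCMs \<Longrightarrow> i < msize A \<Longrightarrow> j < msize A \<Longrightarrow> ent A j i = 1 / ent A i j"
  unfolding PCMs_def is_pcm_def by blast

lemma triple_incons_ge_one:
  assumes "0 < a i j" "0 < a j k" "0 < a i k"
  shows "1 \<le> triple_incons a i j k"
proof -
  have "0 < a i j * a j k / a i k" using assms by simp
  then have "1 \<le> max (a i j * a j k / a i k) (1 / (a i j * a j k / a i k))"
    by (rule max_inverse_ge_one)
  then show ?thesis by (simp add: triple_incons_def)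
qed

lemma mu_ge_one: assumes "A \<in> PCMs" shows "1 \<le> mu A"
proof -
  from assms obtain i j k where "i < j" "j < k" "k < msize A"
    and "mu A = triple_incons (ent A) i j k"
    using mu_attained unfolding PCMs_def by blast
  then show ?thesis by (simp add: triple_incons_ge_one pcm_pos[OF assms])
qed

lemma msize_mtranspose [simp]: "msize (mtranspose A) = msize A"
  by (simp add: mtranspose_def msize_def)

lemma ent_mtranspose [simp]: "ent (mtranspose A) i j = ent A j i"
  by (simp add: mtranspose_def ent_def)

lemma mu_mtranspose: assumes "A \<in> PCMs" shows "mu (mtranspose A) = mu A"
proof -
  have "triple_incons (ent (mtranspose A)) i j k = triple_incons (ent A) i j k"
    if "i < j" "j < k" "k < msize A" for i j k
  proof -
    have "ent A j i = 1 / ent A i j" "ent A k j = 1 / ent A j k" "ent A k i = 1 / ent A i k"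
      using that by (auto intro: pcm_reciprocal[OF assms])
    then have "ent A j i * ent A k j / ent A k i = ent A i k / (ent A i j * ent A j k)"
          and "ent A k i / (ent A j i * ent A k j) = ent A i j * ent A j k / ent A i k"
      by simp_all
    then show ?thesis unfolding triple_incons_def by (simp add: max.commute)
  qed
  then have "{triple_incons (ent (mtranspose A)) i j k | i j k. i < j \<and> j < k \<and> k < msize A}
           = {triple_incons (ent A) i j k | i j k. i < j \<and> j < k \<and> k < msize A}"
    by (intro Collect_cong) (metis (no_types, lifting))
  then show ?thesis by (simp add: mu_eq_Max)
qed

lemma mu_submatrix_le: assumes "submatrix B A" shows "mu B \<le> mu A"
proof -
  from assms obtain \<sigma> where mono: "strict_mono_on {0..<msize B} \<sigma>"
    and range: "\<forall>i<msize B. \<sigma> i < msize A"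
    and entries: "\<forall>i<msize B. \<forall>j<msize B. ent B i j = ent A (\<sigma> i) (\<sigma> j)"
    and "3 \<le> msize B"
    unfolding submatrix_def PCMs_def by blast
  obtain i j k where ijk: "i < j" "j < k" "k < msize B"
    and attained: "mu B = triple_incons (ent B) i j k"
    using \<open>3 \<le> msize B\<close> by (rule mu_attained)
  note attained
  also have "\<dots> = triple_incons (ent A) (\<sigma> i) (\<sigma> j) (\<sigma> k)"
    using ijk entries by (simp add: triple_incons_def)
  also have "\<dots> \<le> mu A"
    using ijk mono range by (intro triple_incons_le_mu) (auto simp: strict_mono_on_def)
  finally show ?thesis .
qed

lemma msize_triad [simp]: "msize (triad t1 t2 t3) = 3"
  by (simp add: triad_def msize_def)

lemma mu_triad: "mu (triad t1 t2 t3) = max (t1 * t3 / t2) (t2 / (t1 * t3))"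
  unfolding mu_size_3[OF msize_triad] by (simp add: triple_incons_def ent_def triad_def)

lemma mu_triad_1_x_1: "1 \<le> x \<Longrightarrow> mu (triad 1 x 1) = x"
  by (simp add: mu_triad max_def order_trans[of "1 / x" 1 x])

lemma rel6_triad_iff:
  "rel6 (triad s1 s2 s3) (triad t1 t2 t3) \<longleftrightarrow>
   mu (triad s1 s2 s3) ^ 3 \<le> mu (triad t1 t2 t3) ^ 3"
  by (simp add: rel6_def)

lemma mu_triad_of_cube_le: assumes "triad_of T A" shows "mu T ^ msize T \<le> mu A ^ 3"
proof -
  have "T \<in> PCMs" "msize T = 3"
    using assms unfolding triad_of_def submatrix_def by auto
  moreover have "mu T \<le> mu A"
    using assms mu_submatrix_le unfolding triad_of_def by blast
  ultimately show ?thesis using mu_ge_one[of T] by (simp add: power_mono)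
qed

lemma rel6_triad_of: assumes "A \<in> PCMs" "triad_of T A" shows "rel6 T A"
proof -
  have "3 \<le> msize A" using assms(1) by (simp add: PCMs_def)
  have "mu T ^ msize T \<le> mu A ^ 3" using assms(2) by (rule mu_triad_of_cube_le)
  also have "\<dots> \<le> mu A ^ msize A"
    using \<open>3 \<le> msize A\<close> mu_ge_one[OF assms(1)] by (rule power_increasing)
  finally show ?thesis unfolding rel6_def .
qed

lemma not_rel6_triad_of:
  assumes "triad_of T A" "3 < msize A" "1 < mu A"
  shows "\<not> rel6 A T"
proof
  assume "rel6 A T"
  then have "mu A ^ msize A \<le> mu T ^ msize T" by (simp add: rel6_def)
  also have "\<dots> \<le> mu A ^ 3" using assms(1) by (rule mu_triad_of_cube_le)
  also have "\<dots> < mu A ^ msize A" using assms(2,3) by (rule power_strict_increasing)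
  finally show False by simp
qed

definition witness_matrix :: mat where
  "witness_matrix = (4, \<lambda>i j. if i = 0 \<and> j = 1 then 2 else if i = 1 \<and> j = 0 then 1/2 else 1)"

lemma witness_matrix_PCMs: "witness_matrix \<in> PCMs"
  unfolding PCMs_def is_pcm_def witness_matrix_def msize_def ent_def by auto

lemma mu_witness_matrix_gt_one: "1 < mu witness_matrix"
proof -
  have "triple_incons (ent witness_matrix) 0 1 2 = 2"
    by (simp add: triple_incons_def witness_matrix_def ent_def)
  moreover have "triple_incons (ent witness_matrix) 0 1 2 \<le> mu witness_matrix"
    by (rule triple_incons_le_mu) (auto simp: witness_matrix_def msize_def)
  ultimately show ?thesis by simp
qed

theorem mainTheorem7:
  shows "inconsistency_ranking rel6 \<and> PR rel6 \<and> IIP rel6 \<and> HTE rel6 \<and> SI rel6 \<and>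
         MON rel6 \<and> \<not> RED rel6"
proof (intro conjI)
  show "inconsistency_ranking rel6"
    unfolding inconsistency_ranking_def rel6_def by auto
  show "PR rel6"
    unfolding PR_def rel6_triad_iff
    by (auto simp: mu_triad_1_x_1 power_mono_iff)
  show "IIP rel6"
    unfolding IIP_def indiff_def rel6_def
    by (simp add: mu_mtranspose)
  show "HTE rel6"
    unfolding HTE_def indiff_def rel6_triad_iff by (simp add: mu_triad max.commute)
  show "SI rel6"
    unfolding SI_def indiff_def rel6_triad_iff by (simp add: mu_triad power2_eq_square)
  show "MON rel6"
    unfolding MON_def using rel6_triad_of by blast
  show "\<not> RED rel6"
    unfolding RED_def indiff_def
    using witness_matrix_PCMs mu_witness_matrix_gt_one not_rel6_triad_of
    by (fastforce simp: witness_matrix_def msize_def)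
qed

end
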